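(* Let $m, n_0, n_1$ be positive integers and $n(\lambda) = n_0 + n_1\lambda$. Suppose nonzero polynomials $x(\lambda), y(\lambda), z(\lambda) \in \mathbb{Q}[\lambda]$ satisfy $$\frac{m}{n(\lambda)} = \frac{1}{x(\lambda)} + \frac{1}{y(\lambda)} + \frac{1}{z(\lambda)}$$ identically, and that two of the three polynomials have degree $1$. Then the third polynomial has degree at most $3$.
   Context: $\lambda$ is an indeterminate; the equation is an identity of rational functions in $\lambda$. *)

theory Defs
  imports "HOL-Computational_Algebra.Polynomial" "HOL-Computational_Algebra.Fraction_Field"
begin

(* Rational functions in lambda over Q: the fraction field of rat poly.
   rf embeds a polynomial as a rational function. *)
definition rf :: "rat poly \<Rightarrow> rat poly fract" where
  "rf p = Fract p 1"

end

theory Submission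
  imports Defs
begin

(* Clearing denominators gives z * (m x y - n y - n x) = n x y, so z divides n x y
   and deg z <= deg n + deg x + deg y = 3. *)

lemma rf_mult: "rf (p * q) = rf p * rf q"
  by (simp add: rf_def mult_fract)

lemma rf_diff: "rf (p - q) = rf p - rf q"
  by (simp add: rf_def diff_fract)

lemma rf_eq_iff: "rf p = rf q \<longleftrightarrow> p = q"
  by (simp add: rf_def eq_fract)

lemma rf_eq_0_iff: "rf p = 0 \<longleftrightarrow> p = 0"
  by (simp add: rf_def Zero_fract_def eq_fract)

lemma egyptian_clear_denominators:
  fixes M N X Y Z :: "'a::field"
  assumes "N \<noteq> 0" "X \<noteq> 0" "Y \<noteq> 0" "Z \<noteq> 0" "M / N = 1/X + 1/Y + 1/Z"
  shows "Z * (M*X*Y - N*Y - N*X) = N*X*Y"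
proof -
  have cleared: "M*X*Y*Z = N*(X*Y + X*Z + Y*Z)"
    using assms by (simp add: field_simps)
  have "Z * (M*X*Y - N*Y - N*X) = M*X*Y*Z - N*(X*Z + Y*Z)"
    by (simp add: algebra_simps)
  also have "\<dots> = N*X*Y"
    unfolding cleared by (simp add: algebra_simps)
  finally show ?thesis .
qed

lemma degree_le_of_egyptian:
  fixes M N x y z :: "rat poly"
  assumes "N \<noteq> 0" "x \<noteq> 0" "y \<noteq> 0" "z \<noteq> 0"
    and eq: "rf M / rf N = 1 / rf x + 1 / rf y + 1 / rf z"
  shows "degree z \<le> degree N + degree x + degree y"
proof -
  have "rf z * (rf M * rf x * rf y - rf N * rf y - rf N * rf x) = rf N * rf x * rf y"
    by (rule egyptian_clear_denominators) (use assms in \<open>auto simp: rf_eq_0_iff\<close>)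
  then have "rf (z * (M*x*y - N*y - N*x)) = rf (N*x*y)"
    by (simp add: rf_mult rf_diff)
  then have "z * (M*x*y - N*y - N*x) = N*x*y"
    unfolding rf_eq_iff .
  then have "z dvd N*x*y"
    by (metis dvd_triv_left)
  then have "degree z \<le> degree (N*x*y)"
    using assms by (simp add: dvd_imp_degree_le)
  also have "\<dots> = degree N + degree x + degree y"
    using assms by (simp add: degree_mult_eq)
  finally show ?thesis .
qed

theorem lemma2:
  fixes m n0 n1 :: nat and x y z :: "rat poly"
  assumes "m > 0" and "n0 > 0" and "n1 > 0"
    and "x \<noteq> 0" and "y \<noteq> 0" and "z \<noteq> 0"
    and eq: "rf (of_nat m) / rf [:of_nat n0, of_nat n1:]
             = 1 / rf x + 1 / rf y + 1 / rf z"
  shows "(degree x = 1 \<and> degree y = 1 \<longrightarrow> degree z \<le> 3) \<and>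
         (degree x = 1 \<and> degree z = 1 \<longrightarrow> degree y \<le> 3) \<and>
         (degree y = 1 \<and> degree z = 1 \<longrightarrow> degree x \<le> 3)"
proof -
  let ?N = "[:of_nat n0, of_nat n1:] :: rat poly"
  have deg_N: "degree ?N = 1" and "?N \<noteq> 0"
    using \<open>n1 > 0\<close> by auto
  have eq_xzy: "rf (of_nat m) / rf ?N = 1 / rf x + 1 / rf z + 1 / rf y"
    and eq_yzx: "rf (of_nat m) / rf ?N = 1 / rf y + 1 / rf z + 1 / rf x"
    using eq by (simp_all add: ac_simps)
  have "degree z \<le> degree ?N + degree x + degree y"
    and "degree y \<le> degree ?N + degree x + degree z"
    and "degree x \<le> degree ?N + degree y + degree z"
    using degree_le_of_egyptian[OF \<open>?N \<noteq> 0\<close> _ _ _ eq]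
      degree_le_of_egyptian[OF \<open>?N \<noteq> 0\<close> _ _ _ eq_xzy]
      degree_le_of_egyptian[OF \<open>?N \<noteq> 0\<close> _ _ _ eq_yzx] assms
    by blast+
  then show ?thesis
    unfolding deg_N by auto
qed

end
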